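(* Let $W=\mathfrak{S}_n$, $1\le c\le n-2$, and let $w_2\in\mathfrak{S}_n$ with $w_2^2=1$. Suppose $\ell(s_{c+1}s_cw_2s_cs_{c+1})=\ell(w_2)+4$, $s_cw_2\ne w_2s_c$, $s_{c+1}s_cw_2s_c\neq s_cw_2s_cs_{c+1}$ and $s_{c+1}w_2s_cs_{c+1}<w_2s_cs_{c+1}$. Then $s_{c+1}w_2<w_2$, and either $s_{c+1}w_2=w_2s_{c+1}$ or $s_{c+1}w_2s_{c+1}<s_{c+1}w_2$.
   Context: $s_j=(j,j+1)$; $\ell$ is the Coxeter length of $\mathfrak{S}_n$ and $<$ is the Bruhat order. *)

theory Defs
  imports "HOL-Combinatorics.Combinatorics"
begin

text \<open>Permutations of S_n are functions p with p permutes {1..n}; the product uv is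
  composition u \<circ> v, i.e. (uv)(i) = u(v(i)).\<close>

definition s :: "nat \<Rightarrow> nat \<Rightarrow> nat" where
  "s j = transpose j (Suc j)"

definition len :: "nat \<Rightarrow> (nat \<Rightarrow> nat) \<Rightarrow> nat" where
  "len n w = card {(i, j). i \<in> {1..n} \<and> j \<in> {1..n} \<and> i < j \<and> w j < w i}"

definition bruhat_step :: "nat \<Rightarrow> ((nat \<Rightarrow> nat) \<times> (nat \<Rightarrow> nat)) set" where
  "bruhat_step n = {(x, x \<circ> transpose i j) | x i j. x permutes {1..n} \<and>
      i \<in> {1..n} \<and> j \<in> {1..n} \<and> i < j \<and> len n x < len n (x \<circ> transpose i j)}"

definition bruhat_lt :: "nat \<Rightarrow> (nat \<Rightarrow> nat) \<Rightarrow> (nat \<Rightarrow> nat) \<Rightarrow> bool" where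
  "bruhat_lt n u w \<longleftrightarrow> (u, w) \<in> (bruhat_step n)\<^sup>+"

end

theory Submission imports Defs begin

text \<open>Let \<open>a = s\<^sub>c\<close>, \<open>b = s\<^sub>c\<^sub>+\<^sub>1\<close> and \<open>y = w\<^sub>2(c+1)\<close>, \<open>z = w\<^sub>2(c+2)\<close>, so that \<open>w\<^sub>2 y = c+1\<close>,
  \<open>w\<^sub>2 z = c+2\<close>. Each of the four multiplications in \<open>b a w\<^sub>2 a b\<close> raises the length by at most
  one, so the length hypothesis forces \<open>w\<^sub>2 a > w\<^sub>2\<close>, i.e. \<open>w\<^sub>2 c < w\<^sub>2 (c+1)\<close>, which rules
  out \<open>y = c\<close>. The Bruhat hypothesis gives \<open>\<ell>(b w\<^sub>2 a b) < \<ell>(w\<^sub>2 a b)\<close>: the value \<open>c+2\<close> stands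
  before \<open>c+1\<close> in \<open>w\<^sub>2 a b\<close>, i.e. \<open>b a z < b a y\<close>, and since \<open>y \<noteq> c\<close> this means \<open>z < y\<close>.
  Thus \<open>c+2\<close> stands before \<open>c+1\<close> in \<open>w\<^sub>2\<close> itself, giving \<open>b w\<^sub>2 < w\<^sub>2\<close>; and unless
  \<open>w\<^sub>2\<close> swaps \<open>c+1\<close> and \<open>c+2\<close> (when it commutes with \<open>b\<close>), \<open>b w\<^sub>2\<close> has a right descent
  at \<open>c+1\<close>, giving \<open>b w\<^sub>2 b < b w\<^sub>2\<close>.\<close>

definition invs :: "nat \<Rightarrow> (nat \<Rightarrow> nat) \<Rightarrow> (nat \<times> nat) set" where
  "invs n w = {(i, j). i \<in> {1..n} \<and> j \<in> {1..n} \<and> i < j \<and> w j < w i}"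

lemma len_eq_card_invs: "len n w = card (invs n w)"
  by (simp add: len_def invs_def)

lemma finite_invs: "finite (invs n w)"
  by (rule finite_subset[of _ "{1..n} \<times> {1..n}"]) (auto simp: invs_def)

lemma s_s [simp]: "s j (s j a) = a"
  by (simp add: s_def)

lemma s_comp_s_comp [simp]: "s j \<circ> (s j \<circ> x) = x" and comp_s_comp_s [simp]: "x \<circ> s j \<circ> s j = x"
  by (auto simp: fun_eq_iff)

lemma s_less_s_iff:
  "a \<noteq> b \<Longrightarrow> s j a < s j b \<longleftrightarrow> (a < b \<and> (a, b) \<noteq> (j, Suc j)) \<or> (a, b) = (Suc j, j)"
  by (auto simp: s_def transpose_def)

lemma s_in_iff: "1 \<le> j \<Longrightarrow> Suc j \<le> n \<Longrightarrow> s j a \<in> {1..n} \<longleftrightarrow> a \<in> {1..n}"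
  by (auto simp: s_def transpose_def)

lemma s_permutes: "1 \<le> j \<Longrightarrow> Suc j \<le> n \<Longrightarrow> s j permutes {1..n}"
  unfolding s_def by (rule permutes_swap_id) auto

lemma s_comp_eq_comp_s:
  assumes "inj w" "w j = Suc j" "w (Suc j) = j"
  shows "s j \<circ> w = w \<circ> s j"
proof
  fix k
  have "k \<noteq> j \<Longrightarrow> k \<noteq> Suc j \<Longrightarrow> w k \<noteq> j \<and> w k \<noteq> Suc j"
    using assms by (metis injD)
  then show "(s j \<circ> w) k = (w \<circ> s j) k"
    using assms by (cases "k = j"; cases "k = Suc j") (auto simp: s_def)
qed

lemma invs_s_comp_ascent:
  assumes "inj x" "x p = j" "x q = Suc j" "p < q" "p \<in> {1..n}" "q \<in> {1..n}"
  shows "invs n (s j \<circ> x) = insert (p, q) (invs n x)"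
proof -
  have pos_j: "x a = j \<longleftrightarrow> a = p" and pos_Suc_j: "x a = Suc j \<longleftrightarrow> a = q" for a
    using assms(1-3) by (metis injD)+
  have "s j (x b) < s j (x a) \<longleftrightarrow> x b < x a \<or> (a, b) = (p, q)" if "a < b" for a b
  proof -
    have "x a \<noteq> x b" using that \<open>inj x\<close> by (metis injD less_irrefl)
    then show ?thesis
      using s_less_s_iff[of "x b" "x a" j] pos_j pos_Suc_j that assms(2-4) by auto
  qed
  then show ?thesis
    using assms unfolding invs_def by auto
qed

lemma invs_comp_s_ascent:
  assumes "1 \<le> j" "Suc j \<le> n" "x j < x (Suc j)"
  shows "invs n (x \<circ> s j) = insert (j, Suc j) ((\<lambda>(a, b). (s j a, s j b)) ` invs n x)"
    (is "_ = insert _ (?g ` _)")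
proof (intro set_eqI iffI)
  fix ab assume "ab \<in> invs n (x \<circ> s j)"
  then obtain a b where ab: "ab = (a, b)" "a \<in> {1..n}" "b \<in> {1..n}" "a < b"
      "x (s j b) < x (s j a)"
    by (auto simp: invs_def)
  show "ab \<in> insert (j, Suc j) (?g ` invs n x)"
  proof (cases "ab = (j, Suc j)")
    case False
    then have "s j a < s j b"
      using s_less_s_iff[of b a j] ab by auto
    moreover have "s j a \<in> {1..n}" "s j b \<in> {1..n}"
      using ab s_in_iff[OF assms(1,2)] by blast+
    ultimately have "(s j a, s j b) \<in> invs n x"
      using ab(5) unfolding invs_def by simp
    moreover have "ab = ?g (s j a, s j b)" using ab by simp
    ultimately show ?thesis by blast
  qed simp
next
  fix ab assume "ab \<in> insert (j, Suc j) (?g ` invs n x)"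
  then consider "ab = (j, Suc j)" | a b where "ab = (s j a, s j b)" "(a, b) \<in> invs n x"
    by auto
  then show "ab \<in> invs n (x \<circ> s j)"
  proof cases
    case 1
    then show ?thesis using assms by (auto simp: invs_def s_def)
  next
    case 2
    then have ab: "a \<in> {1..n}" "b \<in> {1..n}" "a < b" "x b < x a"
      by (auto simp: invs_def)
    then have "s j a < s j b"
      using s_less_s_iff[of a b j] assms(3) by auto
    moreover have "s j a \<in> {1..n}" "s j b \<in> {1..n}"
      using ab s_in_iff[OF assms(1,2)] by blast+
    ultimately show ?thesis using 2 ab unfolding invs_def by simp
  qed
qed

lemma len_s_comp_ascent:
  assumes "inj x" "x p = j" "x q = Suc j" "p < q" "p \<in> {1..n}" "q \<in> {1..n}"
  shows "len n (s j \<circ> x) = Suc (len n x)"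
proof -
  have "(p, q) \<notin> invs n x" using assms(2,3) by (auto simp: invs_def)
  then show ?thesis
    using invs_s_comp_ascent[OF assms] finite_invs by (simp add: len_eq_card_invs)
qed

lemma len_comp_s_ascent:
  assumes "1 \<le> j" "Suc j \<le> n" "x j < x (Suc j)"
  shows "len n (x \<circ> s j) = Suc (len n x)"
proof -
  have "(j, Suc j) \<notin> (\<lambda>(a, b). (s j a, s j b)) ` invs n x"
  proof
    assume "(j, Suc j) \<in> (\<lambda>(a, b). (s j a, s j b)) ` invs n x"
    then obtain a b where "(a, b) \<in> invs n x" "s j a = j" "s j b = Suc j" by auto
    then show False by (auto simp: invs_def s_def transpose_def split: if_splits)
  qed
  moreover have "inj_on (\<lambda>(a, b). (s j a, s j b)) (invs n x)"
    by (auto simp: inj_on_def s_def dest: transpose_eq_imp_eq)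
  ultimately show ?thesis
    using invs_comp_s_ascent[OF assms] finite_invs by (simp add: len_eq_card_invs card_image)
qed

lemma len_s_comp_descent:
  assumes "inj x" "x p = j" "x q = Suc j" "q < p" "p \<in> {1..n}" "q \<in> {1..n}"
  shows "len n x = Suc (len n (s j \<circ> x))"
proof -
  have "len n (s j \<circ> (s j \<circ> x)) = Suc (len n (s j \<circ> x))"
    by (rule len_s_comp_ascent[of _ q _ p]) (use assms in \<open>auto simp: s_def inj_compose\<close>)
  then show ?thesis by simp
qed

lemma len_comp_s_descent:
  assumes "1 \<le> j" "Suc j \<le> n" "x (Suc j) < x j"
  shows "len n x = Suc (len n (x \<circ> s j))"
proof -
  have "len n (x \<circ> s j \<circ> s j) = Suc (len n (x \<circ> s j))"
    by (rule len_comp_s_ascent) (use assms in \<open>auto simp: s_def\<close>)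
  then show ?thesis by simp
qed

lemma len_comp_s_le:
  assumes "inj x" "1 \<le> j" "Suc j \<le> n"
  shows "len n (x \<circ> s j) \<le> Suc (len n x)"
proof -
  have "x j \<noteq> x (Suc j)" using assms(1) by (metis injD n_not_Suc_n)
  then show ?thesis
    using len_comp_s_ascent[OF assms(2,3)] len_comp_s_descent[OF assms(2,3)]
    by (cases "x j < x (Suc j)") auto
qed

lemma len_s_comp_le:
  assumes "x permutes {1..n}" "1 \<le> j" "Suc j \<le> n"
  shows "len n (s j \<circ> x) \<le> Suc (len n x)"
proof -
  have "j \<in> x ` {1..n}" "Suc j \<in> x ` {1..n}"
    using assms(2,3) unfolding permutes_image[OF assms(1)] by auto
  then obtain p q where pq: "p \<in> {1..n}" "q \<in> {1..n}" "x p = j" "x q = Suc j"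
    by (metis imageE)
  have "inj x" using permutes_inj[OF assms(1)] .
  consider "p < q" | "q < p" using pq(3,4) by (metis linorder_neqE_nat n_not_Suc_n)
  then show ?thesis
  proof cases
    case 1
    then show ?thesis using len_s_comp_ascent[OF \<open>inj x\<close> pq(3,4) _ pq(1,2)] by simp
  next
    case 2
    then show ?thesis using len_s_comp_descent[OF \<open>inj x\<close> pq(3,4) _ pq(1,2)] by simp
  qed
qed

lemma s_comp_left_descent:
  assumes "inj x" "x p = j" "x q = Suc j" "p \<in> {1..n}" "q \<in> {1..n}"
    and "len n (s j \<circ> x) < len n x"
  shows "q < p"
proof -
  have "p \<noteq> q" using assms(2,3) by auto
  then show ?thesis
    using len_s_comp_ascent[OF assms(1-3) _ assms(4,5)] assms(6) by fastforce
qed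

lemma bruhat_step_imp_len_less: "(u, v) \<in> bruhat_step n \<Longrightarrow> len n u < len n v"
  by (auto simp: bruhat_step_def)

lemma bruhat_lt_imp_len_less: "bruhat_lt n u v \<Longrightarrow> len n u < len n v"
  unfolding bruhat_lt_def
  by (induction rule: trancl_induct) (use bruhat_step_imp_len_less less_trans in blast)+

lemma bruhat_lt_transposeI:
  assumes "u permutes {1..n}" "i \<in> {1..n}" "j \<in> {1..n}" "i < j" "v = u \<circ> transpose i j"
    and "len n u < len n v"
  shows "bruhat_lt n u v"
  unfolding bruhat_lt_def
  by (rule r_into_trancl) (use assms in \<open>unfold bruhat_step_def, blast\<close>)

lemma bruhat_lt_s_comp:
  assumes "x permutes {1..n}" "1 \<le> j" "Suc j \<le> n"
    and "x p = j" "x q = Suc j" "q < p" "p \<in> {1..n}" "q \<in> {1..n}"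
  shows "bruhat_lt n (s j \<circ> x) x"
proof (rule bruhat_lt_transposeI[OF _ assms(8,7,6)])
  show "s j \<circ> x permutes {1..n}"
    using permutes_compose[OF assms(1) s_permutes[OF assms(2,3)]] .
  show "x = s j \<circ> x \<circ> transpose q p"
  proof
    fix k
    have "k \<noteq> p \<Longrightarrow> k \<noteq> q \<Longrightarrow> x k \<noteq> j \<and> x k \<noteq> Suc j"
      using assms(4,5) permutes_inj[OF assms(1)] by (metis injD)
    then show "x k = (s j \<circ> x \<circ> transpose q p) k"
      using assms(4-6) by (cases "k = p"; cases "k = q") (auto simp: s_def)
  qed
  show "len n (s j \<circ> x) < len n x"
    using len_s_comp_descent[OF permutes_inj[OF assms(1)] assms(4-8)] by simp
qed

lemma bruhat_lt_comp_s:
  assumes "x permutes {1..n}" "1 \<le> j" "Suc j \<le> n" "x (Suc j) < x j"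
  shows "bruhat_lt n (x \<circ> s j) x"
proof (rule bruhat_lt_transposeI)
  show "x \<circ> s j permutes {1..n}"
    using permutes_compose[OF s_permutes[OF assms(2,3)] assms(1)] .
  show "x = x \<circ> s j \<circ> transpose j (Suc j)"
    by (auto simp: fun_eq_iff s_def)
  show "len n (x \<circ> s j) < len n x"
    using len_comp_s_descent[OF assms(2-4)] by simp
qed (use assms in auto)

lemma right_ascent_of_len_plus_4:
  assumes "w permutes {1..n}" "1 \<le> j" "Suc (Suc j) \<le> n"
    and "len n (s (Suc j) \<circ> (s j \<circ> (w \<circ> s j \<circ> s (Suc j)))) = len n w + 4"
  shows "w j < w (Suc j)"
proof (rule ccontr)
  have perm: "s j permutes {1..n}" "s (Suc j) permutes {1..n}"
    using s_permutes[of j n] s_permutes[of "Suc j" n] assms(2,3) by auto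
  have wab: "w \<circ> s j \<circ> s (Suc j) permutes {1..n}"
    using assms(1) perm by (auto intro: permutes_compose)
  have "len n (s (Suc j) \<circ> (s j \<circ> (w \<circ> s j \<circ> s (Suc j)))) \<le> len n (w \<circ> s j \<circ> s (Suc j)) + 2"
    using len_s_comp_le[OF permutes_compose[OF wab perm(1)], of "Suc j"]
      len_s_comp_le[OF wab, of j] assms(2,3) by simp
  moreover have "len n (w \<circ> s j \<circ> s (Suc j)) \<le> Suc (len n (w \<circ> s j))"
    using assms(1,2,3) perm
    by (intro len_comp_s_le) (auto intro: permutes_inj permutes_compose)
  moreover assume "\<not> w j < w (Suc j)"
  then have "w (Suc j) < w j"
    using permutes_inj[OF assms(1)] by (metis injD linorder_neqE_nat n_not_Suc_n)
  then have "len n w = Suc (len n (w \<circ> s j))"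
    using len_comp_s_descent assms(2,3) by simp
  ultimately show False using assms(4) by linarith
qed

lemma less_of_s_s_less:
  assumes "y \<noteq> j" "y \<noteq> z" "s (Suc j) (s j z) < s (Suc j) (s j y)"
  shows "z < y"
  using assms by (auto simp: s_def transpose_def split: if_splits)

lemma left_descent_of_comp_s_s:
  assumes "w permutes {1..n}" "1 \<le> j" "Suc (Suc j) \<le> n"
    and "len n (s (Suc j) \<circ> (w \<circ> s j \<circ> s (Suc j))) < len n (w \<circ> s j \<circ> s (Suc j))"
    and "w y = Suc j" "w z = Suc (Suc j)" "y \<in> {1..n}" "z \<in> {1..n}" "y \<noteq> j"
  shows "z < y"
proof -
  have "y \<noteq> z" using assms(5,6) by auto
  moreover have "s (Suc j) (s j z) < s (Suc j) (s j y)"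
  proof (rule s_comp_left_descent[of "w \<circ> s j \<circ> s (Suc j)" _ "Suc j" _ n])
    show "inj (w \<circ> s j \<circ> s (Suc j))"
      using s_permutes[of j n] s_permutes[of "Suc j" n] assms(1-3)
      by (auto intro: inj_compose permutes_inj)
    show "(w \<circ> s j \<circ> s (Suc j)) (s (Suc j) (s j y)) = Suc j"
      "(w \<circ> s j \<circ> s (Suc j)) (s (Suc j) (s j z)) = Suc (Suc j)"
      using assms(5,6) by simp_all
    show "s (Suc j) (s j y) \<in> {1..n}" "s (Suc j) (s j z) \<in> {1..n}"
      using assms(2,3,7,8) s_in_iff[of j n] s_in_iff[of "Suc j" n] by auto
  qed (rule assms(4))
  ultimately show ?thesis using less_of_s_s_less assms(9) by blast
qed

lemma commute_or_bruhat_lt_conj_s: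
  assumes "w permutes {1..n}" "\<And>k. w (w k) = k" "1 \<le> j" "Suc j \<le> n"
    and "w (Suc j) < w j"
  shows "s j \<circ> w = w \<circ> s j \<or> bruhat_lt n (s j \<circ> w \<circ> s j) (s j \<circ> w)"
proof (cases "w j = Suc j \<and> w (Suc j) = j")
  case True
  then show ?thesis using s_comp_eq_comp_s[OF permutes_inj[OF assms(1)]] by simp
next
  case False
  then have "(s j \<circ> w) (Suc j) < (s j \<circ> w) j"
    using assms(2,5) by (auto simp: s_def transpose_def)
  then show ?thesis
    using bruhat_lt_comp_s[OF permutes_compose[OF assms(1) s_permutes]] assms(3,4) by simp
qed

theorem lemma2p17:
  fixes n c :: nat and w2 :: "nat \<Rightarrow> nat"
  assumes "1 \<le> c" and "c + 2 \<le> n"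
    and "w2 permutes {1..n}" and "w2 \<circ> w2 = id"
    and "len n (s (c+1) \<circ> s c \<circ> w2 \<circ> s c \<circ> s (c+1)) = len n w2 + 4"
    and "s c \<circ> w2 \<noteq> w2 \<circ> s c"
    and "s (c+1) \<circ> s c \<circ> w2 \<circ> s c \<noteq> s c \<circ> w2 \<circ> s c \<circ> s (c+1)"
    and "bruhat_lt n (s (c+1) \<circ> w2 \<circ> s c \<circ> s (c+1)) (w2 \<circ> s c \<circ> s (c+1))"
  shows "bruhat_lt n (s (c+1) \<circ> w2) w2 \<and>
         (s (c+1) \<circ> w2 = w2 \<circ> s (c+1) \<or>
          bruhat_lt n (s (c+1) \<circ> w2 \<circ> s (c+1)) (s (c+1) \<circ> w2))"
proof -
  define y z where "y = w2 (Suc c)" and "z = w2 (Suc (Suc c))"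
  have invol: "w2 (w2 k) = k" for k using assms(4) by (metis comp_apply id_apply)
  have yz: "w2 y = Suc c" "w2 z = Suc (Suc c)" "y \<in> {1..n}" "z \<in> {1..n}"
    using invol permutes_in_image[OF assms(3)] assms(1,2) by (auto simp: y_def z_def)
  have "w2 c < w2 (Suc c)"
    using right_ascent_of_len_plus_4[OF assms(3,1)] assms(2,5) by (simp add: comp_assoc)
  moreover have "y \<noteq> c"
  proof
    assume "y = c"
    then have "w2 c = Suc c" using invol[of "Suc c"] by (simp add: y_def)
    with \<open>w2 c < w2 (Suc c)\<close> \<open>y = c\<close> show False by (simp add: y_def)
  qed
  ultimately have "z < y"
    using left_descent_of_comp_s_s[OF assms(3,1) _ _ yz] bruhat_lt_imp_len_less[OF assms(8)]
      assms(2) by (simp add: comp_assoc)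
  then have "bruhat_lt n (s (Suc c) \<circ> w2) w2"
    using bruhat_lt_s_comp[OF assms(3) _ _ yz(1,2) _ yz(3,4)] assms(1,2) by simp
  moreover have "s (Suc c) \<circ> w2 = w2 \<circ> s (Suc c) \<or>
      bruhat_lt n (s (Suc c) \<circ> w2 \<circ> s (Suc c)) (s (Suc c) \<circ> w2)"
    using commute_or_bruhat_lt_conj_s[OF assms(3) invol] \<open>z < y\<close> assms(1,2)
    by (simp add: y_def z_def)
  ultimately show ?thesis by simp
qed

end
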